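(* Let $d\ge 1$, $T\ge 1$, let $\mathcal{X}\subseteq\mathbb{R}^d$ be a non-empty closed convex set, and let $0<\mu\le L$. Let $f_1,\dots,f_T:\mathcal{X}\to[0,\infty)$ be differentiable with $\frac{\mu}{2}\|y-x\|^2\le f_t(y)-f_t(x)-\langle\nabla f_t(x),y-x\rangle\le\frac{L}{2}\|y-x\|^2$ for all $t$ and $x,y\in\mathcal{X}$. Let $C_{\mathcal{A}_o}$ be the quadratic-switching cost of the OMGD algorithm with $K=\lceil\frac{L+\mu}{2\mu}\ln4\rceil$ from a starting point $x_0\in\mathcal{X}$. Then for any $\alpha>0$, $$C_{\mathcal{A}_o}\le\sum_{t=1}^T f_t(x_t^\star)+\frac{1}{2\alpha}\sum_{t=1}^T\|\nabla f_t(x_t^\star)\|^2+(L+\alpha+5)\big(\|x_1-x_1^\star\|^2+2\mathcal{P}_{2,T}^\star\big),$$ where $x_1$ is the first OMGD iterate.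
   Context: $x_t^\star=\arg\min_{x\in\mathcal{X}}f_t(x)$ and $\mathcal{P}_{2,T}^\star=\sum_{t=2}^T\|x_t^\star-x_{t-1}^\star\|^2$. OMGD with parameter $K$: $x_1=x_0$; for $t=2,\dots,T$, $z_t^{(0)}=x_{t-1}$, $z_t^{(k)}=\Pi_{\mathcal{X}}\big(z_t^{(k-1)}-\frac1L\nabla f_{t-1}(z_t^{(k-1)})\big)$ ($k=1,\dots,K$), $x_t=z_t^{(K)}$, where $\Pi_{\mathcal{X}}$ is Euclidean projection onto $\mathcal{X}$. $C_{\mathcal{A}_o}=\sum_{t=1}^T\big(f_t(x_t)+\frac12\|x_t-x_{t-1}\|^2\big)$. *)

theory Defs
  imports "HOL-Analysis.Analysis"
begin

text \<open>One inner gradient step of OMGD at round t+1 (uses the gradient of f_t):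
  z \<mapsto> \<Pi>_X(z - (1/L) grad f_t(z)).\<close>
definition omgd_step :: "'a::euclidean_space set \<Rightarrow> real \<Rightarrow> (nat \<Rightarrow> 'a \<Rightarrow> 'a) \<Rightarrow> nat \<Rightarrow> 'a \<Rightarrow> 'a" where
  "omgd_step X L g t z = closest_point X (z - (1 / L) *\<^sub>R g t z)"

primrec omgd :: "'a::euclidean_space set \<Rightarrow> real \<Rightarrow> (nat \<Rightarrow> 'a \<Rightarrow> 'a) \<Rightarrow> nat \<Rightarrow> 'a \<Rightarrow> nat \<Rightarrow> 'a" where
  "omgd X L g K x0 0 = x0"
| "omgd X L g K x0 (Suc t) =
     (if t = 0 then x0 else (omgd_step X L g t ^^ K) (omgd X L g K x0 t))"

definition omgd_cost :: "'a::euclidean_space set \<Rightarrow> real \<Rightarrow> (nat \<Rightarrow> 'a \<Rightarrow> real) \<Rightarrow> (nat \<Rightarrow> 'a \<Rightarrow> 'a) \<Rightarrow> nat \<Rightarrow> 'a \<Rightarrow> nat \<Rightarrow> real" where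
  "omgd_cost X L f g K x0 T =
     (\<Sum>t=1..T. f t (omgd X L g K x0 t)
        + (1/2) * (norm (omgd X L g K x0 t - omgd X L g K x0 (t - 1)))\<^sup>2)"

end

theory Submission
  imports Defs
begin

(* For a mu-strongly convex, L-smooth function, one projected gradient step with step size 1/L
   contracts the squared distance to the constrained minimiser by the factor (L - mu)/(L + mu),
   so the K inner steps of round t shrink it by at least 1/4: |x_(t+1) - x*_t|^2 <= d_t / 4,
   where d_t = |x_t - x*_t|^2.  The inequality |a - c|^2 <= 2|a - b|^2 + 2|b - c|^2 then gives
   d_t <= d_(t-1) / 2 + 2|x*_t - x*_(t-1)|^2, hence sum d_t <= 2 d_1 + 4 P*, and bounds each
   switching cost |x_t - x_(t-1)|^2 by 5/2 d_(t-1).  Finally smoothness at x*_t together with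
   Young's inequality gives f_t(x_t) <= f_t(x*_t) + |grad f_t(x*_t)|^2 / (2 alpha) + (L + alpha)/2 d_t. *)

lemma inner_le_young:
  fixes u v :: "'a::real_inner"
  assumes "0 < \<alpha>"
  shows "u \<bullet> v \<le> 1 / (2 * \<alpha>) * (norm u)\<^sup>2 + \<alpha> / 2 * (norm v)\<^sup>2"
proof -
  have "0 \<le> (norm (u - \<alpha> *\<^sub>R v))\<^sup>2" by simp
  also have "\<dots> = (norm u)\<^sup>2 - 2 * \<alpha> * (u \<bullet> v) + \<alpha>\<^sup>2 * (norm v)\<^sup>2"
    unfolding power2_norm_eq_inner
    by (simp add: inner_diff_left inner_diff_right inner_commute power2_eq_square algebra_simps)
  finally show ?thesis
    using assms by (simp add: field_simps power2_eq_square)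
qed

lemma power2_norm_diff_le_triangle:
  fixes u v w :: "'a::real_normed_vector"
  shows "(norm (u - w))\<^sup>2 \<le> 2 * (norm (u - v))\<^sup>2 + 2 * (norm (v - w))\<^sup>2"
proof -
  have "norm (u - w) \<le> norm (u - v) + norm (v - w)"
    by (rule norm_diff_triangle_ineq[of u v v w, simplified])
  then have "(norm (u - w))\<^sup>2 \<le> (norm (u - v) + norm (v - w))\<^sup>2"
    by (simp add: power_mono)
  also have "\<dots> \<le> 2 * (norm (u - v))\<^sup>2 + 2 * (norm (v - w))\<^sup>2"
    using sum_squares_ge_zero[of "norm (u - v) - norm (v - w)" 0]
    by (simp add: power2_eq_square algebra_simps)
  finally show ?thesis .
qed

lemma one_minus_power_le_inverse:
  fixes a c :: real
  assumes "0 \<le> a" "a \<le> 1" "0 < c" "ln c \<le> real n * a"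
  shows "(1 - a) ^ n \<le> 1 / c"
proof -
  have "(1 - a) ^ n \<le> exp (- a) ^ n"
    using assms(2) exp_ge_add_one_self[of "- a"] by (intro power_mono) auto
  also have "\<dots> = exp (- (real n * a))"
    by (simp add: exp_of_nat_mult[symmetric] mult.commute)
  also have "\<dots> \<le> exp (- ln c)"
    using assms(4) by simp
  also have "\<dots> = 1 / c"
    using assms(3) by (simp add: exp_minus inverse_eq_divide)
  finally show ?thesis .
qed

lemma contraction_factor_power_le_quarter:
  fixes \<mu> L :: real
  assumes "0 < \<mu>" "\<mu> \<le> L"
  shows "((L - \<mu>) / (L + \<mu>)) ^ nat \<lceil>(L + \<mu>) / (2 * \<mu>) * ln 4\<rceil> \<le> 1 / 4"
proof -
  define a where "a = 2 * \<mu> / (L + \<mu>)"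
  define r where "r = (L + \<mu>) / (2 * \<mu>) * ln 4"
  have a: "0 \<le> a" "a \<le> 1"
    using assms by (simp_all add: a_def)
  have "ln 4 = r * a"
    using assms by (simp add: a_def r_def)
  also have "\<dots> \<le> real (nat \<lceil>r\<rceil>) * a"
    using a by (intro mult_right_mono real_nat_ceiling_ge)
  finally have "(1 - a) ^ nat \<lceil>r\<rceil> \<le> 1 / 4"
    using a by (intro one_minus_power_le_inverse) auto
  moreover have "(L - \<mu>) / (L + \<mu>) = 1 - a"
    using assms by (simp add: a_def field_simps)
  ultimately show ?thesis
    by (simp add: r_def)
qed

lemma inner_nonneg_at_constrained_minimizer:
  fixes f :: "'a::real_inner \<Rightarrow> real"
  assumes "convex X" "0 < L" "x \<in> X" "y \<in> X"
    and min: "\<And>z. z \<in> X \<Longrightarrow> f x \<le> f z"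
    and smooth: "\<And>z. z \<in> X \<Longrightarrow> f z - f x - u \<bullet> (z - x) \<le> L / 2 * (norm (z - x))\<^sup>2"
  shows "0 \<le> u \<bullet> (y - x)"
proof (rule ccontr)
  define c where "c = u \<bullet> (y - x)"
  define n where "n = (norm (y - x))\<^sup>2"
  assume "\<not> 0 \<le> u \<bullet> (y - x)"
  then have "c < 0" "0 < n"
    by (auto simp: c_def n_def)
  \<comment> \<open>small enough that the quadratic term of the smoothness bound is at most half the linear one\<close>
  define s where "s = min 1 (- c / (L * n))"
  have s: "0 < s" "s \<le> 1" "s * (L * n) \<le> - c"
    using \<open>c < 0\<close> \<open>0 < n\<close> \<open>0 < L\<close> by (auto simp: s_def min_def field_simps)
  define z where "z = x + s *\<^sub>R (y - x)"
  have "z = (1 - s) *\<^sub>R x + s *\<^sub>R y"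
    by (simp add: z_def algebra_simps)
  with assms(1,3,4) s(1,2) have "z \<in> X"
    by (simp add: convexD)
  have "f x + s * c \<le> f z + s * c"
    using min[OF \<open>z \<in> X\<close>] by simp
  also have "\<dots> \<le> f x + 2 * s * c + L / 2 * s\<^sup>2 * n"
    using smooth[OF \<open>z \<in> X\<close>] s(1)
    by (simp add: z_def c_def n_def power_mult_distrib)
  finally have "0 \<le> s * (c + L / 2 * s * n)"
    by (simp add: algebra_simps power2_eq_square)
  then have "0 \<le> c + L / 2 * s * n"
    using s(1) by (simp add: zero_le_mult_iff)
  then show False
    using s(3) \<open>c < 0\<close> by (simp add: algebra_simps)
qed

lemma projected_gradient_step_contraction:
  fixes X :: "'a::{real_inner,heine_borel} set" and f :: "'a \<Rightarrow> real" and G :: "'a \<Rightarrow> 'a"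
  assumes "closed X" "convex X" "0 < \<mu>" "0 < L" "x \<in> X" "z \<in> X"
    and min: "\<And>y. y \<in> X \<Longrightarrow> f x \<le> f y"
    and strong: "\<And>v w. v \<in> X \<Longrightarrow> w \<in> X \<Longrightarrow> \<mu> / 2 * (norm (w - v))\<^sup>2 \<le> f w - f v - G v \<bullet> (w - v)"
    and smooth: "\<And>v w. v \<in> X \<Longrightarrow> w \<in> X \<Longrightarrow> f w - f v - G v \<bullet> (w - v) \<le> L / 2 * (norm (w - v))\<^sup>2"
  shows "(norm (closest_point X (z - (1 / L) *\<^sub>R G z) - x))\<^sup>2 \<le> (L - \<mu>) / (L + \<mu>) * (norm (z - x))\<^sup>2"
proof -
  define p where "p = closest_point X (z - (1 / L) *\<^sub>R G z)"
  have "p \<in> X"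
    unfolding p_def using assms(1,5) by (auto intro: closest_point_in_set)
  have "(z - (1 / L) *\<^sub>R G z - p) \<bullet> (x - p) \<le> 0"
    unfolding p_def using assms(2,1,5) by (rule closest_point_dot)
  then have "(z - p) \<bullet> (x - p) \<le> 1 / L * (G z \<bullet> (x - p))"
    by (simp add: inner_diff_left)
  then have "L * ((z - p) \<bullet> (x - p)) \<le> G z \<bullet> (x - p)"
    using \<open>0 < L\<close> by (simp add: field_simps)
  then have proj: "G z \<bullet> (p - x) \<le> L * ((z - p) \<bullet> (p - x))"
    by (simp add: inner_diff_right algebra_simps)
  have "0 \<le> G x \<bullet> (p - x)"
    using assms(2,4,5) \<open>p \<in> X\<close> min smooth[OF \<open>x \<in> X\<close>] by (rule inner_nonneg_at_constrained_minimizer)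
  then have "\<mu> / 2 * (norm (p - x))\<^sup>2 + \<mu> / 2 * (norm (x - z))\<^sup>2 \<le> G z \<bullet> (p - x) + L / 2 * (norm (p - z))\<^sup>2"
    using strong[OF \<open>x \<in> X\<close> \<open>p \<in> X\<close>] strong[OF \<open>z \<in> X\<close> \<open>x \<in> X\<close>] smooth[OF \<open>z \<in> X\<close> \<open>p \<in> X\<close>]
    by (simp add: inner_diff_right)
  also have "\<dots> \<le> L / 2 * (2 * ((z - p) \<bullet> (p - x)) + (norm (p - z))\<^sup>2)"
    using proj by (simp add: algebra_simps)
  also have "2 * ((z - p) \<bullet> (p - x)) + (norm (p - z))\<^sup>2 = (norm (z - x))\<^sup>2 - (norm (p - x))\<^sup>2"
    unfolding power2_norm_eq_inner by (simp add: inner_diff_left inner_diff_right inner_commute)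
  finally have "(L + \<mu>) * (norm (p - x))\<^sup>2 \<le> (L - \<mu>) * (norm (z - x))\<^sup>2"
    by (simp add: norm_minus_commute algebra_simps)
  then show ?thesis
    using assms(3,4) by (simp add: p_def field_simps)
qed

lemma funpow_contraction:
  fixes V :: "'a \<Rightarrow> real"
  assumes "\<And>z. z \<in> X \<Longrightarrow> h z \<in> X" "\<And>z. z \<in> X \<Longrightarrow> V (h z) \<le> q * V z" "0 \<le> q" "z \<in> X"
  shows "V ((h ^^ n) z) \<le> q ^ n * V z"
proof -
  have "(h ^^ n) z \<in> X \<and> V ((h ^^ n) z) \<le> q ^ n * V z"
  proof (induction n)
    case 0
    then show ?case using assms(4) by simp
  next
    case (Suc n)
    then have "V (h ((h ^^ n) z)) \<le> q * (q ^ n * V z)"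
      using assms(2,3) by (meson mult_left_mono order_trans)
    with Suc assms(1) show ?case by simp
  qed
  then show ?thesis ..
qed

lemma projected_gradient_iterates_quarter_distance:
  fixes X :: "'a::{real_inner,heine_borel} set" and f :: "'a \<Rightarrow> real" and G :: "'a \<Rightarrow> 'a"
  assumes "X \<noteq> {}" "closed X" "convex X" "0 < \<mu>" "\<mu> \<le> L" "x \<in> X" "z \<in> X"
    and min: "\<And>y. y \<in> X \<Longrightarrow> f x \<le> f y"
    and strong: "\<And>v w. v \<in> X \<Longrightarrow> w \<in> X \<Longrightarrow> \<mu> / 2 * (norm (w - v))\<^sup>2 \<le> f w - f v - G v \<bullet> (w - v)"
    and smooth: "\<And>v w. v \<in> X \<Longrightarrow> w \<in> X \<Longrightarrow> f w - f v - G v \<bullet> (w - v) \<le> L / 2 * (norm (w - v))\<^sup>2"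
  shows "(norm (((\<lambda>y. closest_point X (y - (1 / L) *\<^sub>R G y)) ^^ nat \<lceil>(L + \<mu>) / (2 * \<mu>) * ln 4\<rceil>) z - x))\<^sup>2
           \<le> (norm (z - x))\<^sup>2 / 4"
proof -
  define q where "q = (L - \<mu>) / (L + \<mu>)"
  have "(norm (((\<lambda>y. closest_point X (y - (1 / L) *\<^sub>R G y)) ^^ nat \<lceil>(L + \<mu>) / (2 * \<mu>) * ln 4\<rceil>) z - x))\<^sup>2
          \<le> q ^ nat \<lceil>(L + \<mu>) / (2 * \<mu>) * ln 4\<rceil> * (norm (z - x))\<^sup>2"
  proof (rule funpow_contraction[where V = "\<lambda>y. (norm (y - x))\<^sup>2"])
    show "closest_point X (y - (1 / L) *\<^sub>R G y) \<in> X" for y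
      using assms(2,1) by (rule closest_point_in_set)
    show "(norm (closest_point X (y - (1 / L) *\<^sub>R G y) - x))\<^sup>2 \<le> q * (norm (y - x))\<^sup>2" if "y \<in> X" for y
      unfolding q_def using assms(2-4) _ assms(6) that min strong smooth
      by (rule projected_gradient_step_contraction) (use assms(4,5) in simp)
  qed (use assms(4,5,7) in \<open>simp_all add: q_def\<close>)
  also have "\<dots> \<le> 1 / 4 * (norm (z - x))\<^sup>2"
    unfolding q_def using assms(4,5) by (intro mult_right_mono contraction_factor_power_le_quarter) auto
  finally show ?thesis by simp
qed

lemma sum_pred_shift_le:
  fixes h :: "nat \<Rightarrow> real"
  assumes "\<And>t. 0 \<le> h t"
  shows "(\<Sum>t=2..T. h (t - 1)) \<le> (\<Sum>t=1..T. h t)"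
proof (cases T)
  case 0
  then show ?thesis by simp
next
  case (Suc m)
  have "(\<Sum>t=2..T. h (t - 1)) = (\<Sum>t=1..m. h t)"
    using sum.shift_bounds_cl_Suc_ivl[of "\<lambda>t. h (t - 1)" 1 m] by (simp add: Suc numeral_2_eq_2)
  also have "\<dots> \<le> (\<Sum>t=1..T. h t)"
    using assms by (intro sum_mono2) (auto simp: Suc)
  finally show ?thesis .
qed

lemma sum_le_of_halving_recurrence:
  fixes d p :: "nat \<Rightarrow> real"
  assumes nonneg: "\<And>t. 0 \<le> d t"
    and rec: "\<And>t. t \<in> {2..T} \<Longrightarrow> d t \<le> d (t - 1) / 2 + 2 * p t"
  shows "(\<Sum>t=1..T. d t) \<le> 2 * d 1 + 4 * (\<Sum>t=2..T. p t)"
proof (cases "T = 0")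
  case True
  then show ?thesis using nonneg[of 1] by simp
next
  case False
  have "(\<Sum>t=2..T. d t) \<le> (\<Sum>t=2..T. d (t - 1) / 2 + 2 * p t)"
    using rec by (rule sum_mono)
  also have "\<dots> = (\<Sum>t=2..T. d (t - 1)) / 2 + 2 * (\<Sum>t=2..T. p t)"
    by (simp add: sum.distrib sum_divide_distrib sum_distrib_left)
  finally have "(\<Sum>t=2..T. d t) \<le> (\<Sum>t=1..T. d t) / 2 + 2 * (\<Sum>t=2..T. p t)"
    using sum_pred_shift_le[of d T, OF nonneg] by linarith
  moreover have "(\<Sum>t=1..T. d t) = d 1 + (\<Sum>t=2..T. d t)"
    using False by (simp add: sum.atLeast_Suc_atMost numeral_2_eq_2)
  ultimately show ?thesis by linarith
qed

lemma tracking_error_sum_le: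
  fixes x xs :: "nat \<Rightarrow> 'a::real_normed_vector"
  assumes "\<And>t. t \<in> {1..<T} \<Longrightarrow> (norm (x (Suc t) - xs t))\<^sup>2 \<le> (norm (x t - xs t))\<^sup>2 / 4"
  shows "(\<Sum>t=1..T. (norm (x t - xs t))\<^sup>2)
           \<le> 2 * (norm (x 1 - xs 1))\<^sup>2 + 4 * (\<Sum>t=2..T. (norm (xs t - xs (t - 1)))\<^sup>2)"
proof (rule sum_le_of_halving_recurrence)
  fix t
  assume "t \<in> {2..T}"
  then obtain s where t: "t = Suc s" and s: "s \<in> {1..<T}"
    by (cases t) auto
  have "(norm (x (Suc s) - xs (Suc s)))\<^sup>2 \<le> 2 * (norm (x (Suc s) - xs s))\<^sup>2 + 2 * (norm (xs s - xs (Suc s)))\<^sup>2"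
    by (rule power2_norm_diff_le_triangle)
  then show "(norm (x t - xs t))\<^sup>2 \<le> (norm (x (t - 1) - xs (t - 1)))\<^sup>2 / 2 + 2 * (norm (xs t - xs (t - 1)))\<^sup>2"
    using assms[OF s] by (simp add: t norm_minus_commute)
qed simp

lemma switching_cost_sum_le:
  fixes x xs :: "nat \<Rightarrow> 'a::real_normed_vector"
  assumes "x 1 = x 0"
    and "\<And>t. t \<in> {1..<T} \<Longrightarrow> (norm (x (Suc t) - xs t))\<^sup>2 \<le> (norm (x t - xs t))\<^sup>2 / 4"
  shows "(\<Sum>t=1..T. (norm (x t - x (t - 1)))\<^sup>2) \<le> 5 / 2 * (\<Sum>t=1..T. (norm (x t - xs t))\<^sup>2)"
proof -
  have "(\<Sum>t=1..T. (norm (x t - x (t - 1)))\<^sup>2) = (\<Sum>t=2..T. (norm (x t - x (t - 1)))\<^sup>2)"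
    using assms(1) by (cases T) (simp_all add: sum.atLeast_Suc_atMost numeral_2_eq_2)
  also have "\<dots> \<le> (\<Sum>t=2..T. 5 / 2 * (norm (x (t - 1) - xs (t - 1)))\<^sup>2)"
  proof (rule sum_mono)
    fix t
    assume "t \<in> {2..T}"
    then obtain s where t: "t = Suc s" and s: "s \<in> {1..<T}"
      by (cases t) auto
    have "(norm (x (Suc s) - x s))\<^sup>2 \<le> 2 * (norm (x (Suc s) - xs s))\<^sup>2 + 2 * (norm (xs s - x s))\<^sup>2"
      by (rule power2_norm_diff_le_triangle)
    then show "(norm (x t - x (t - 1)))\<^sup>2 \<le> 5 / 2 * (norm (x (t - 1) - xs (t - 1)))\<^sup>2"
      using assms(2)[OF s] by (simp add: t norm_minus_commute)
  qed
  also have "\<dots> = 5 / 2 * (\<Sum>t=2..T. (norm (x (t - 1) - xs (t - 1)))\<^sup>2)"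
    by (simp add: sum_distrib_left)
  also have "\<dots> \<le> 5 / 2 * (\<Sum>t=1..T. (norm (x t - xs t))\<^sup>2)"
    by (intro mult_left_mono sum_pred_shift_le) auto
  finally show ?thesis .
qed

lemma tracking_cost_le:
  fixes x xs :: "nat \<Rightarrow> 'a::real_inner" and f :: "nat \<Rightarrow> 'a \<Rightarrow> real" and G :: "nat \<Rightarrow> 'a"
  assumes "x 1 = x 0" "0 \<le> L" "0 < \<alpha>"
    and quarter: "\<And>t. t \<in> {1..<T} \<Longrightarrow> (norm (x (Suc t) - xs t))\<^sup>2 \<le> (norm (x t - xs t))\<^sup>2 / 4"
    and smooth: "\<And>t. t \<in> {1..T} \<Longrightarrow>
                   f t (x t) - f t (xs t) - G t \<bullet> (x t - xs t) \<le> L / 2 * (norm (x t - xs t))\<^sup>2"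
  shows "(\<Sum>t=1..T. f t (x t) + 1 / 2 * (norm (x t - x (t - 1)))\<^sup>2)
           \<le> (\<Sum>t=1..T. f t (xs t)) + 1 / (2 * \<alpha>) * (\<Sum>t=1..T. (norm (G t))\<^sup>2)
             + (L + \<alpha> + 5) * ((norm (x 1 - xs 1))\<^sup>2 + 2 * (\<Sum>t=2..T. (norm (xs t - xs (t - 1)))\<^sup>2))"
proof -
  define D where "D = (\<Sum>t=1..T. (norm (x t - xs t))\<^sup>2)"
  define A where "A = (norm (x 1 - xs 1))\<^sup>2 + 2 * (\<Sum>t=2..T. (norm (xs t - xs (t - 1)))\<^sup>2)"
  have "(\<Sum>t=1..T. f t (x t))
          \<le> (\<Sum>t=1..T. f t (xs t) + 1 / (2 * \<alpha>) * (norm (G t))\<^sup>2 + (L + \<alpha>) / 2 * (norm (x t - xs t))\<^sup>2)"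
  proof (rule sum_mono)
    fix t
    assume "t \<in> {1..T}"
    then show "f t (x t) \<le> f t (xs t) + 1 / (2 * \<alpha>) * (norm (G t))\<^sup>2 + (L + \<alpha>) / 2 * (norm (x t - xs t))\<^sup>2"
      using smooth[OF \<open>t \<in> {1..T}\<close>] inner_le_young[OF \<open>0 < \<alpha>\<close>, of "G t" "x t - xs t"] by (simp add: field_simps)
  qed
  then have rounds: "(\<Sum>t=1..T. f t (x t))
      \<le> (\<Sum>t=1..T. f t (xs t)) + 1 / (2 * \<alpha>) * (\<Sum>t=1..T. (norm (G t))\<^sup>2) + (L + \<alpha>) / 2 * D"
    by (simp add: D_def sum.distrib sum_distrib_left)
  have switching: "(\<Sum>t=1..T. (norm (x t - x (t - 1)))\<^sup>2) \<le> 5 / 2 * D"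
    unfolding D_def using assms(1) quarter by (rule switching_cost_sum_le)
  have "(\<Sum>t=1..T. f t (x t) + 1 / 2 * (norm (x t - x (t - 1)))\<^sup>2)
      = (\<Sum>t=1..T. f t (x t)) + 1 / 2 * (\<Sum>t=1..T. (norm (x t - x (t - 1)))\<^sup>2)"
    by (simp add: sum.distrib sum_distrib_left)
  also have "\<dots> \<le> (\<Sum>t=1..T. f t (xs t)) + 1 / (2 * \<alpha>) * (\<Sum>t=1..T. (norm (G t))\<^sup>2)
                  + ((L + \<alpha>) / 2 + 5 / 4) * D"
    using rounds switching by (simp add: algebra_simps)
  also have "((L + \<alpha>) / 2 + 5 / 4) * D \<le> ((L + \<alpha>) / 2 + 5 / 4) * (2 * A)"
    using tracking_error_sum_le[of T x xs, OF quarter] assms(2,3)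
    by (intro mult_left_mono) (auto simp: D_def A_def)
  also have "\<dots> = (L + \<alpha> + 5) * A - 5 / 2 * A"
    by (simp add: algebra_simps)
  also have "\<dots> \<le> (L + \<alpha> + 5) * A"
    by (simp add: A_def sum_nonneg)
  finally show ?thesis
    by (simp add: A_def)
qed

lemma omgd_in_set:
  assumes "closed X" "X \<noteq> {}" "x0 \<in> X"
  shows "omgd X L g K x0 t \<in> X"
proof (induction t)
  case (Suc t)
  have "(omgd_step X L g t ^^ n) y \<in> X" if "y \<in> X" for n y
    using that by (induction n) (auto simp: omgd_step_def intro: closest_point_in_set[OF assms(1,2)])
  with Suc assms(3) show ?case by simp
qed (simp add: assms(3))

theorem lemma4:
  fixes X :: "'a::euclidean_space set"
    and f :: "nat \<Rightarrow> 'a \<Rightarrow> real"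
    and g :: "nat \<Rightarrow> 'a \<Rightarrow> 'a"
    and xs :: "nat \<Rightarrow> 'a"
    and \<mu> L \<alpha> :: real and T :: nat and x0 :: 'a
  assumes "X \<noteq> {}" and "closed X" and "convex X"
    and "0 < \<mu>" and "\<mu> \<le> L" and "1 \<le> T"
    and nonneg: "\<And>t x. t \<in> {1..T} \<Longrightarrow> x \<in> X \<Longrightarrow> 0 \<le> f t x"
    and grad: "\<And>t x. t \<in> {1..T} \<Longrightarrow> x \<in> X \<Longrightarrow>
                 (f t has_derivative (\<lambda>h. g t x \<bullet> h)) (at x within X)"
    and sc: "\<And>t x y. t \<in> {1..T} \<Longrightarrow> x \<in> X \<Longrightarrow> y \<in> X \<Longrightarrow>
                 \<mu> / 2 * (norm (y - x))\<^sup>2 \<le> f t y - f t x - g t x \<bullet> (y - x)"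
    and sm: "\<And>t x y. t \<in> {1..T} \<Longrightarrow> x \<in> X \<Longrightarrow> y \<in> X \<Longrightarrow>
                 f t y - f t x - g t x \<bullet> (y - x) \<le> L / 2 * (norm (y - x))\<^sup>2"
    and xs_in: "\<And>t. t \<in> {1..T} \<Longrightarrow> xs t \<in> X"
    and xs_min: "\<And>t y. t \<in> {1..T} \<Longrightarrow> y \<in> X \<Longrightarrow> f t (xs t) \<le> f t y"
    and "x0 \<in> X"
    and "0 < \<alpha>"
  shows "omgd_cost X L f g (nat \<lceil>(L + \<mu>) / (2 * \<mu>) * ln 4\<rceil>) x0 T
           \<le> (\<Sum>t=1..T. f t (xs t))
             + 1 / (2 * \<alpha>) * (\<Sum>t=1..T. (norm (g t (xs t)))\<^sup>2)
             + (L + \<alpha> + 5) *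
               ((norm (omgd X L g (nat \<lceil>(L + \<mu>) / (2 * \<mu>) * ln 4\<rceil>) x0 1 - xs 1))\<^sup>2
                + 2 * (\<Sum>t=2..T. (norm (xs t - xs (t - 1)))\<^sup>2))"
proof -
  define K where "K = nat \<lceil>(L + \<mu>) / (2 * \<mu>) * ln 4\<rceil>"
  define x where "x = omgd X L g K x0"
  have x_in: "x t \<in> X" for t
    unfolding x_def using assms(2,1) \<open>x0 \<in> X\<close> by (rule omgd_in_set)
  have quarter: "(norm (x (Suc t) - xs t))\<^sup>2 \<le> (norm (x t - xs t))\<^sup>2 / 4" if "t \<in> {1..<T}" for t
  proof -
    have t: "t \<in> {1..T}"
      using that by simp
    have "omgd_step X L g t = (\<lambda>y. closest_point X (y - (1 / L) *\<^sub>R g t y))"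
      by (simp add: fun_eq_iff omgd_step_def)
    then show ?thesis
      using that projected_gradient_iterates_quarter_distance[OF assms(1-5) xs_in[OF t] x_in
          xs_min[OF t] sc[OF t] sm[OF t]]
      by (simp add: x_def K_def)
  qed
  have "omgd_cost X L f g K x0 T = (\<Sum>t=1..T. f t (x t) + 1 / 2 * (norm (x t - x (t - 1)))\<^sup>2)"
    by (simp add: omgd_cost_def x_def)
  also have "\<dots> \<le> (\<Sum>t=1..T. f t (xs t)) + 1 / (2 * \<alpha>) * (\<Sum>t=1..T. (norm (g t (xs t)))\<^sup>2)
                  + (L + \<alpha> + 5) * ((norm (x 1 - xs 1))\<^sup>2 + 2 * (\<Sum>t=2..T. (norm (xs t - xs (t - 1)))\<^sup>2))"
    using quarter sm xs_in x_in assms(4,5) \<open>0 < \<alpha>\<close>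
    by (intro tracking_cost_le) (auto simp: x_def)
  finally show ?thesis
    by (simp add: K_def x_def)
qed

end
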